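(* Let $g:\mathbb{R}\to\mathbb{R}$ be differentiable, $c_0>0$, $G(t)=\int_0^tg(s)\,ds$, assume $\int_{-\infty}^\infty e^{-c_0G(t)}dt<\infty$, let $c_1 = 1/\int_{-\infty}^\infty e^{-c_0G(t)}dt$, and let $Y$ have density $p(t)=c_1e^{-c_0G(t)}$ on $\mathbb{R}$ with distribution function $F(x)=P(Y\le x)$. Assume: (H1) $g$ is non-decreasing, $g(t)\ge 0$ for $t>0$ and $g(t)\le 0$ for $t\le 0$; (H2) there is $c_2<\infty$ such that for all $x$, $\min\big(1/c_1, 1/|c_0 g(x)|\big)\,(|x| + 3/c_1)\,\max(1, c_0|g'(x)|) \le c_2$. Then for all real $x$: $$\min(1-F(x),F(x))\le d_1p(x),\qquad |p'(x)|\min(F(x),1-F(x))\le d_2p^2(x),$$ $$M(x)\,\big|(p'/p)'(x)\big|\le d_3p(x),\qquad M(x)\le d_4p(x),$$ with $d_1=1/c_1$, $d_2=1$, $d_3=c_2$, $d_4=c_2$, where $$M(x)=\min\Big(E|Y|I_{\{Y\le x\}}+E|Y|\,F(x),\; E|Y|I_{\{Y>x\}}+E|Y|\,(1-F(x))\Big).$$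
   Context: In (H2), $1/|c_0g(x)|$ is interpreted as $+\infty$ when $g(x)=0$. $I_A$ denotes the indicator of the event $A$. *)

theory Defs
  imports "HOL-Analysis.Analysis"
begin

end

theory Submission
  imports Defs "HOL-Probability.Distributions"
begin

(*
  Since g = G' is non-decreasing, G is convex, and with G 0 = 0 it is superadditive on [0, oo).
  For x >= 0 the tail of the weight q = exp (- c0 * G) beyond x is therefore dominated in two ways:
  q (x + u) <= q x * q u by superadditivity, and q (x + u) <= q x * exp (- c0 * g x * u) by the
  tangent line of G at x (where g x >= 0). Integrating these bounds controls the tail mass and the
  tail first moment by q x times explicit constants, and a Fubini argument with the first bound
  gives E|Y| <= 1/c1. The reflection t |-> -t handles x <= 0, and p'/p = - c0 * g turns these
  tail estimates into the four inequalities.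
*)

lemma interval_integral_0_has_real_derivative:
  fixes g :: "real \<Rightarrow> real"
  assumes cont: "continuous_on UNIV g"
  shows "((\<lambda>t. LBINT s=0..t. g s) has_real_derivative g x) (at x)"
proof -
  define a where "a = min 0 x - 1"
  define b where "b = max 0 x + 1"
  have "a \<le> 0" "0 \<le> b" "a \<le> x" "x \<le> b" by (auto simp: a_def b_def)
  with interval_integral_FTC2[of a 0 b g x] cont
  have "((\<lambda>u. LBINT y=0..u. g y) has_vector_derivative g x) (at x within {a..b})"
    by (simp add: zero_ereal_def continuous_on_subset)
  then have "((\<lambda>u. LBINT y=0..u. g y) has_vector_derivative g x) (at x within {a<..<b})"
    by (rule has_vector_derivative_within_subset) auto
  then show ?thesis
    by (subst (asm) has_vector_derivative_within_open)
       (auto simp: a_def b_def has_real_derivative_iff_has_vector_derivative)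
qed

lemma mono_derivative_superadditive:
  fixes G g :: "real \<Rightarrow> real"
  assumes G': "\<And>x. (G has_real_derivative g x) (at x)" and "mono g" and "G 0 = 0"
    and "0 \<le> u" "0 \<le> v"
  shows "G u + G v \<le> G (u + v)"
proof -
  have "G (u + 0) - G 0 \<le> G (u + v) - G v"
  proof (rule DERIV_nonneg_imp_nondecreasing[OF \<open>0 \<le> v\<close>])
    fix s
    have "((\<lambda>s. G (u + s) - G s) has_real_derivative g (u + s) - g s) (at s)"
      using DERIV_diff[OF DERIV_chain2[OF G' DERIV_add[OF DERIV_const DERIV_ident]] G'[of s]]
      by simp
    moreover have "0 \<le> g (u + s) - g s"
      using \<open>mono g\<close> \<open>0 \<le> u\<close> by (simp add: mono_def)
    ultimately show "\<exists>y. ((\<lambda>s. G (u + s) - G s) has_real_derivative y) (at s) \<and> 0 \<le> y"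
      by blast
  qed
  then show ?thesis using \<open>G 0 = 0\<close> by simp
qed

lemma nn_integral_Ici_power_times_exp:
  fixes a :: real
  assumes "0 < a"
  shows "(\<integral>\<^sup>+u\<in>{0..}. ennreal (u ^ k * exp (- a * u)) \<partial>lborel) = ennreal (fact k / a ^ Suc k)"
proof -
  let ?h = "\<lambda>u. ennreal (u ^ k * exp (- u)) * indicator {0..} u"
  have "(\<integral>\<^sup>+u\<in>{0..}. ennreal (u ^ k * exp (- a * u)) \<partial>lborel)
      = (\<integral>\<^sup>+u. ennreal (1 / a ^ k) * ?h (0 + a * u) \<partial>lborel)"
    using assms by (intro nn_integral_cong)
      (auto simp: power_mult_distrib ennreal_mult'[symmetric] zero_le_mult_iff split: split_indicator)
  also have "\<dots> = ennreal (1 / a ^ k) * (\<integral>\<^sup>+u. ?h (0 + a * u) \<partial>lborel)"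
    by (rule nn_integral_cmult) simp
  also have "(\<integral>\<^sup>+u. ?h (0 + a * u) \<partial>lborel) = ennreal (1 / a) * (\<integral>\<^sup>+u. ?h u \<partial>lborel)"
    using nn_integral_real_affine[where c=a and t=0 and f="?h"] assms
    by (simp add: ennreal_mult''[symmetric] mult.assoc[symmetric] ennreal_divide_times)
  finally show ?thesis
    using assms by (simp add: nn_intergal_power_times_exp_Ici ennreal_mult''[symmetric] mult.assoc[symmetric])
qed

lemma nn_integral_Ici_shift:
  fixes f :: "real \<Rightarrow> ennreal"
  assumes [measurable]: "f \<in> borel_measurable borel"
  shows "(\<integral>\<^sup>+t\<in>{x..}. f t \<partial>lborel) = (\<integral>\<^sup>+u\<in>{0..}. f (x + u) \<partial>lborel)"
  using nn_integral_real_affine[where c=1 and t=x and f="\<lambda>t. f t * indicator {x..} t"]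
  by (simp add: indicator_def)

lemma nn_integral_Ici_le_dominated:
  fixes q r :: "real \<Rightarrow> real"
  assumes [measurable]: "q \<in> borel_measurable borel" "r \<in> borel_measurable borel"
    and "0 \<le> C" and dom: "\<And>u. 0 \<le> u \<Longrightarrow> q (x + u) \<le> C * r u"
  shows "(\<integral>\<^sup>+t\<in>{x..}. ennreal (q t) \<partial>lborel) \<le> ennreal C * (\<integral>\<^sup>+u\<in>{0..}. ennreal (r u) \<partial>lborel)"
proof -
  have "(\<integral>\<^sup>+t\<in>{x..}. ennreal (q t) \<partial>lborel) = (\<integral>\<^sup>+u\<in>{0..}. ennreal (q (x + u)) \<partial>lborel)"
    by (rule nn_integral_Ici_shift) simp
  also have "\<dots> \<le> (\<integral>\<^sup>+u. ennreal C * (ennreal (r u) * indicator {0..} u) \<partial>lborel)"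
    using dom \<open>0 \<le> C\<close>
    by (intro nn_integral_mono) (auto simp: ennreal_mult'[symmetric] intro: ennreal_leI split: split_indicator)
  also have "\<dots> = ennreal C * (\<integral>\<^sup>+u\<in>{0..}. ennreal (r u) \<partial>lborel)"
    by (rule nn_integral_cmult) simp
  finally show ?thesis .
qed

lemma nn_integral_Ici_moment_le_dominated:
  fixes q r :: "real \<Rightarrow> real"
  assumes [measurable]: "q \<in> borel_measurable borel" "r \<in> borel_measurable borel"
    and "0 \<le> x" "0 \<le> C" and "\<And>u. 0 \<le> u \<Longrightarrow> 0 \<le> r u"
    and dom: "\<And>u. 0 \<le> u \<Longrightarrow> q (x + u) \<le> C * r u"
  shows "(\<integral>\<^sup>+t\<in>{x..}. ennreal (\<bar>t\<bar> * q t) \<partial>lborel)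
    \<le> ennreal C * (ennreal x * (\<integral>\<^sup>+u\<in>{0..}. ennreal (r u) \<partial>lborel)
                   + (\<integral>\<^sup>+u\<in>{0..}. ennreal (u * r u) \<partial>lborel))"
proof -
  have "(\<integral>\<^sup>+t\<in>{x..}. ennreal (\<bar>t\<bar> * q t) \<partial>lborel)
      \<le> ennreal C * (\<integral>\<^sup>+u\<in>{0..}. ennreal ((x + u) * r u) \<partial>lborel)"
    using assms by (intro nn_integral_Ici_le_dominated) (auto simp: mult.left_commute[of C] intro!: mult_left_mono)
  also have "(\<integral>\<^sup>+u\<in>{0..}. ennreal ((x + u) * r u) \<partial>lborel)
      = (\<integral>\<^sup>+u. ennreal x * (ennreal (r u) * indicator {0..} u) + ennreal (u * r u) * indicator {0..} u \<partial>lborel)"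
    using assms by (intro nn_integral_cong)
      (auto simp: distrib_right ennreal_mult' split: split_indicator)
  also have "\<dots> = ennreal x * (\<integral>\<^sup>+u\<in>{0..}. ennreal (r u) \<partial>lborel)
                   + (\<integral>\<^sup>+u\<in>{0..}. ennreal (u * r u) \<partial>lborel)"
    by (simp add: nn_integral_add nn_integral_cmult)
  finally show ?thesis .
qed

lemma nn_integral_Ici_moment_le_square:
  fixes q :: "real \<Rightarrow> real"
  assumes [measurable]: "q \<in> borel_measurable borel"
    and nonneg: "\<And>t. 0 \<le> q t"
    and submult: "\<And>u v. 0 \<le> u \<Longrightarrow> 0 \<le> v \<Longrightarrow> q (u + v) \<le> q u * q v"
  shows "(\<integral>\<^sup>+t\<in>{0..}. ennreal (t * q t) \<partial>lborel) \<le> (\<integral>\<^sup>+t\<in>{0..}. ennreal (q t) \<partial>lborel)\<^sup>2"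
proof -
  let ?I = "\<integral>\<^sup>+t\<in>{0..}. ennreal (q t) \<partial>lborel"
  \<comment> \<open>write \<open>t\<close> as the length of \<open>[0, t]\<close>; after exchanging the integrals, the inner one is the tail of \<open>q\<close> beyond \<open>s\<close>\<close>
  define H where "H = (\<lambda>t s::real. if 0 \<le> s \<and> s \<le> t then ennreal (q t) else 0)"
  have [measurable]: "case_prod H \<in> borel_measurable (lborel \<Otimes>\<^sub>M lborel)"
    unfolding H_def by measurable
  have "(\<integral>\<^sup>+s. H t s \<partial>lborel) = ennreal (t * q t) * indicator {0..} t" for t
  proof -
    have "(\<integral>\<^sup>+s. H t s \<partial>lborel) = (\<integral>\<^sup>+s. ennreal (q t) * indicator {0..t} s \<partial>lborel)"
      by (intro nn_integral_cong) (auto simp: H_def indicator_def)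
    also have "\<dots> = ennreal (q t) * emeasure lborel {0..t}"
      by (rule nn_integral_cmult_indicator) simp
    also have "\<dots> = ennreal (t * q t) * indicator {0..} t"
      using nonneg[of t] by (auto simp: ennreal_mult' mult.commute indicator_def)
    finally show ?thesis .
  qed
  then have "(\<integral>\<^sup>+t\<in>{0..}. ennreal (t * q t) \<partial>lborel) = (\<integral>\<^sup>+t. (\<integral>\<^sup>+s. H t s \<partial>lborel) \<partial>lborel)"
    by simp
  also have "\<dots> = (\<integral>\<^sup>+s. (\<integral>\<^sup>+t. H t s \<partial>lborel) \<partial>lborel)"
    by (rule lborel_pair.Fubini') simp
  also have "\<dots> \<le> (\<integral>\<^sup>+s. ?I * (ennreal (q s) * indicator {0..} s) \<partial>lborel)"
  proof (rule nn_integral_mono)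
    fix s :: real
    have "(\<integral>\<^sup>+t. H t s \<partial>lborel) = (\<integral>\<^sup>+t\<in>{s..}. ennreal (q t) \<partial>lborel)" if "0 \<le> s"
      using that by (intro nn_integral_cong) (auto simp: H_def indicator_def)
    moreover have "(\<integral>\<^sup>+t\<in>{s..}. ennreal (q t) \<partial>lborel) \<le> ennreal (q s) * ?I" if "0 \<le> s"
      using that nonneg submult by (intro nn_integral_Ici_le_dominated) auto
    ultimately show "(\<integral>\<^sup>+t. H t s \<partial>lborel) \<le> ?I * (ennreal (q s) * indicator {0..} s)"
      by (cases "0 \<le> s") (auto simp: H_def mult.commute)
  qed
  also have "\<dots> = ?I * ?I"
    by (rule nn_integral_cmult) simp
  finally show ?thesis by (simp add: power2_eq_square)
qed

lemma set_integral_le_of_nn_set_integral_le: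
  fixes f :: "real \<Rightarrow> real"
  assumes "A \<subseteq> B" "(\<integral>\<^sup>+t\<in>B. ennreal (f t) \<partial>lborel) \<le> ennreal r" "0 \<le> r"
  shows "(LBINT t:A. f t) \<le> r"
  unfolding set_lebesgue_integral_def
proof (rule integral_real_bounded[OF \<open>0 \<le> r\<close>])
  have "(\<integral>\<^sup>+t. ennreal (indicator A t *\<^sub>R f t) \<partial>lborel) \<le> (\<integral>\<^sup>+t\<in>B. ennreal (f t) \<partial>lborel)"
    using \<open>A \<subseteq> B\<close> by (intro nn_integral_mono) (auto split: split_indicator)
  then show "(\<integral>\<^sup>+t. ennreal (indicator A t *\<^sub>R f t) \<partial>lborel) \<le> ennreal r"
    using assms(2) by order
qed

lemma tail_combination:
  fixes Z zs a y qx Q U E :: real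
  assumes "0 < Z" "0 \<le> zs" "zs \<le> Z" "0 \<le> y" "0 \<le> a" "0 \<le> qx" "0 \<le> Q" "0 \<le> E" "E \<le> Z\<^sup>2"
    and Q1: "Q \<le> qx * zs" and Q2: "0 < a \<Longrightarrow> Q \<le> qx / a"
    and U1: "U \<le> qx * (y * zs + zs\<^sup>2)" and U2: "0 < a \<Longrightarrow> U \<le> qx * (y / a + 1 / a\<^sup>2)"
  shows "U + E / Z * Q \<le> (if a = 0 then Z else min Z (1 / a)) * (y + 3 * Z) * qx"
proof -
  have "E / Z \<le> Z"
    using assms by (simp add: divide_le_eq power2_eq_square)
  then have EQ: "E / Z * Q \<le> Z * Q"
    using \<open>0 \<le> Q\<close> by (rule mult_right_mono)
  show ?thesis
  proof (cases "a = 0 \<or> Z \<le> 1 / a")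
    case True
    have "y * zs + zs\<^sup>2 \<le> y * Z + Z\<^sup>2"
      using assms by (intro add_mono mult_left_mono power_mono) auto
    then have "U \<le> qx * (y * Z + Z\<^sup>2)"
      using U1 \<open>0 \<le> qx\<close> by (meson mult_left_mono order.trans)
    moreover have "Q \<le> qx * Z"
      using Q1 \<open>zs \<le> Z\<close> \<open>0 \<le> qx\<close> by (meson mult_left_mono order.trans)
    then have "Z * Q \<le> Z * (qx * Z)"
      using \<open>0 < Z\<close> by (simp add: mult_left_mono)
    ultimately have "U + E / Z * Q \<le> Z * (y + 2 * Z) * qx"
      using EQ by (simp add: algebra_simps power2_eq_square)
    also have "\<dots> \<le> Z * (y + 3 * Z) * qx"
      using assms by (intro mult_right_mono mult_left_mono) auto
    finally show ?thesis
      using True by auto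
  next
    case False
    then have "0 < a" "1 / a < Z"
      using \<open>0 \<le> a\<close> by auto
    then have "1 / a\<^sup>2 \<le> Z / a"
      by (simp add: power2_eq_square field_simps)
    then have "qx * (y / a + 1 / a\<^sup>2) \<le> qx * (y / a + Z / a)"
      using \<open>0 \<le> qx\<close> by (simp add: mult_left_mono)
    then have "U \<le> qx * (y / a + Z / a)"
      using U2 \<open>0 < a\<close> by linarith
    moreover have "Z * Q \<le> Z * (qx / a)"
      using Q2 \<open>0 < a\<close> \<open>0 < Z\<close> by (intro mult_left_mono) auto
    moreover have "1 / a * (y + 2 * Z) * qx = qx * (y / a + Z / a) + Z * (qx / a)"
      by (simp add: field_simps) (simp add: add_divide_distrib)
    ultimately have "U + E / Z * Q \<le> 1 / a * (y + 2 * Z) * qx"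
      using EQ by linarith
    also have "\<dots> \<le> 1 / a * (y + 3 * Z) * qx"
      using assms \<open>0 < a\<close> by (intro mult_right_mono mult_left_mono) auto
    finally show ?thesis
      using \<open>0 < a\<close> \<open>1 / a < Z\<close> by auto
  qed
qed

lemma le_times_max_one:
  fixes m k b c d e :: real
  assumes "m \<le> k * b" "0 \<le> k" "0 < b" "\<bar>d\<bar> \<le> e" "k * max 1 e \<le> c"
  shows "m \<le> c * b" "m * \<bar>d\<bar> \<le> c * b"
proof -
  have "k * 1 \<le> k * max 1 e" "k * e \<le> k * max 1 e"
    using \<open>0 \<le> k\<close> by (intro mult_left_mono; simp)+
  then have "k \<le> c" "k * e \<le> c"
    using assms(5) by linarith+
  then have "k * b \<le> c * b"
    using \<open>0 < b\<close> by (simp add: mult_right_mono)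
  then show "m \<le> c * b"
    using assms(1) by linarith
  show "m * \<bar>d\<bar> \<le> c * b"
  proof (cases "m \<le> 0")
    case True
    have "m * \<bar>d\<bar> \<le> 0"
      using True by (simp add: mult_nonpos_nonneg)
    also have "0 \<le> c * b"
      using \<open>k \<le> c\<close> \<open>0 \<le> k\<close> \<open>0 < b\<close> by simp
    finally show ?thesis .
  next
    case False
    then have "m * \<bar>d\<bar> \<le> k * b * e"
      using assms by (intro mult_mono) auto
    also have "\<dots> \<le> c * b"
      using \<open>k * e \<le> c\<close> \<open>0 < b\<close> by (simp add: mult.commute mult.left_commute mult_left_mono)
    finally show ?thesis .
  qed
qed

locale convex_potential =
  fixes G g :: "real \<Rightarrow> real" and c :: real
  assumes G_has_derivative: "\<And>x. (G has_real_derivative g x) (at x)"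
    and mono_g: "mono g" and G_0: "G 0 = 0" and c_pos: "0 < c"
    and integrable_exp: "integrable lborel (\<lambda>t. exp (- c * G t))"
begin

text \<open>\<open>q\<close> is the unnormalised density, \<open>Z = 1/c1\<close> its mass and \<open>E / Z\<close> the mean of \<open>|Y|\<close>;
  \<open>scale x\<close> is the factor \<open>min (1/c1) (1/|c0 g x|)\<close> of (H2), read as \<open>1/c1\<close> when \<open>g x = 0\<close>.\<close>

definition q :: "real \<Rightarrow> real" where "q t = exp (- c * G t)"

definition Z :: real where "Z = (\<integral>t. q t \<partial>lborel)"

definition E :: real where "E = (\<integral>t. \<bar>t\<bar> * q t \<partial>lborel)"

definition Z_right :: real where "Z_right = (LBINT t:{0..}. q t)"

definition scale :: "real \<Rightarrow> real"
  where "scale x = (if g x = 0 then Z else min Z (1 / \<bar>c * g x\<bar>))"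

lemma q_pos: "0 < q t"
  by (simp add: q_def)

lemma borel_measurable_q [measurable]: "q \<in> borel_measurable borel"
proof -
  have "continuous_on UNIV G"
    using G_has_derivative by (meson DERIV_isCont continuous_at_imp_continuous_on)
  then show ?thesis
    unfolding q_def[abs_def] by (intro borel_measurable_continuous_onI continuous_intros)
qed

lemma integrable_q: "integrable lborel q"
  using integrable_exp by (simp add: q_def[abs_def])

lemma set_integral_q_nonneg: "0 \<le> (LBINT t:A. q t)"
  unfolding set_lebesgue_integral_def using q_pos
  by (intro Bochner_Integration.integral_nonneg) (simp add: less_imp_le)

lemma set_integral_q_le_Z: "A \<in> sets borel \<Longrightarrow> (LBINT t:A. q t) \<le> Z"
  unfolding Z_def set_lebesgue_integral_def using q_pos integrable_q
  by (intro integral_mono integrable_mult_indicator) (auto simp: less_imp_le split: split_indicator)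

lemma set_integrable_q: "A \<in> sets borel \<Longrightarrow> set_integrable lborel A q"
  unfolding set_integrable_def using integrable_q by (intro integrable_mult_indicator) auto

lemma nn_set_integral_q: "A \<in> sets borel \<Longrightarrow> (\<integral>\<^sup>+t\<in>A. ennreal (q t) \<partial>lborel) = ennreal (LBINT t:A. q t)"
  using q_pos integrable_q by (intro nn_set_integral_eq_set_integral) (auto simp: less_imp_le)

lemma Z_pos: "0 < Z"
proof -
  have "0 \<le> Z"
    using set_integral_q_nonneg[of UNIV] by (simp add: Z_def set_lebesgue_integral_def)
  moreover have "Z \<noteq> 0"
  proof
    assume "Z = 0"
    then have "AE t in lborel. q t = 0"
      using integral_nonneg_eq_0_iff_AE[OF integrable_q] q_pos by (simp add: Z_def less_imp_le)
    moreover have "{t \<in> space lborel. q t \<noteq> 0} = UNIV"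
      using q_pos by (simp add: less_imp_neq[symmetric])
    ultimately have "emeasure lborel (UNIV :: real set) = 0"
      using AE_iff_measurable[of UNIV lborel "\<lambda>t. q t = 0"] by simp
    then show False
      by simp
  qed
  ultimately show ?thesis
    by simp
qed

lemma q_submultiplicative:
  assumes "0 \<le> u" "0 \<le> v"
  shows "q (u + v) \<le> q u * q v"
proof -
  have "c * (G u + G v) \<le> c * G (u + v)"
    using mono_derivative_superadditive[OF G_has_derivative mono_g G_0 assms] c_pos by simp
  then show ?thesis
    by (simp add: q_def algebra_simps flip: exp_add)
qed

lemma q_le_tangent: "q t \<le> q x * exp (- (c * g x) * (t - x))"
proof -
  have "convex_on UNIV G"
    using G_has_derivative mono_g by (intro convex_on_realI[where f'=g]) (auto simp: monoD)
  then have "g x * (t - x) \<le> G t - G x"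
    using G_has_derivative by (intro convex_on_imp_above_tangent) auto
  then have "c * (G x + g x * (t - x)) \<le> c * G t"
    using c_pos by simp
  then show ?thesis
    by (simp add: q_def algebra_simps flip: exp_add)
qed

lemma reflect_potential: "convex_potential (\<lambda>t. G (- t)) (\<lambda>t. - g (- t)) c"
proof
  show "((\<lambda>t. G (- t)) has_real_derivative - g (- x)) (at x)" for x
    using DERIV_chain2[OF G_has_derivative DERIV_minus[OF DERIV_ident]] by simp
  show "mono (\<lambda>t. - g (- t))"
    using mono_g by (auto simp: mono_def)
  show "integrable lborel (\<lambda>t. exp (- c * G (- t)))"
    using lborel_integrable_real_affine_iff[where c="-1" and t=0 and f="\<lambda>t. exp (- c * G t)"]
      integrable_exp by simp
qed (use G_0 c_pos in auto)

lemma nn_integral_q_Ici: "(\<integral>\<^sup>+t\<in>{0..}. ennreal (q t) \<partial>lborel) = ennreal Z_right"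
  unfolding Z_right_def by (rule nn_set_integral_q) simp

lemma Z_right_nonneg: "0 \<le> Z_right"
  by (simp add: Z_right_def set_integral_q_nonneg)

lemma Z_right_le_Z: "Z_right \<le> Z"
  unfolding Z_right_def by (rule set_integral_q_le_Z) simp

lemma nn_integral_moment_q_Ici: "(\<integral>\<^sup>+t\<in>{0..}. ennreal (t * q t) \<partial>lborel) \<le> (ennreal Z_right)\<^sup>2"
  using nn_integral_Ici_moment_le_square[of q] q_pos q_submultiplicative nn_integral_q_Ici
  by (simp add: less_imp_le)

lemma E_nonneg: "0 \<le> E"
  unfolding E_def using q_pos by (intro Bochner_Integration.integral_nonneg) (simp add: less_imp_le)

lemma E_le_Z_square: "E \<le> Z\<^sup>2"
proof -
  interpret R: convex_potential "\<lambda>t. G (- t)" "\<lambda>t. - g (- t)" c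
    by (rule reflect_potential)
  have Rq: "R.q t = q (- t)" for t
    by (simp add: R.q_def q_def)
  have Z_left: "(LBINT t:{..0}. q t) = R.Z_right"
    unfolding R.Z_right_def Rq by (subst set_integral_reflect) (simp add: atLeast_def)
  have "Z_right + R.Z_right = (\<integral>t. indicator {0..} t *\<^sub>R q t + indicator {..0} t *\<^sub>R q t \<partial>lborel)"
    unfolding Z_right_def Z_left[symmetric] set_lebesgue_integral_def
    using set_integrable_q[of "{0..}"] set_integrable_q[of "{..0}"]
    by (intro Bochner_Integration.integral_add[symmetric]) (auto simp: set_integrable_def)
  also have "\<dots> = Z"
    unfolding Z_def using AE_lborel_singleton[of "0::real"]
    by (intro integral_cong_AE) (auto elim!: AE_mp simp: indicator_def)
  finally have Z_split: "Z_right + R.Z_right = Z" .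
  have "(\<integral>\<^sup>+t. ennreal (\<bar>t\<bar> * q t) \<partial>lborel)
      = (\<integral>\<^sup>+t\<in>{0..}. ennreal (t * q t) \<partial>lborel) + (\<integral>\<^sup>+t\<in>{..<0}. ennreal (\<bar>t\<bar> * q t) \<partial>lborel)"
    by (subst nn_integral_add[symmetric]) (auto intro!: nn_integral_cong split: split_indicator)
  also have "(\<integral>\<^sup>+t\<in>{..<0}. ennreal (\<bar>t\<bar> * q t) \<partial>lborel) \<le> (\<integral>\<^sup>+t\<in>{0..}. ennreal (t * R.q t) \<partial>lborel)"
    by (subst nn_integral_real_affine[where c="-1" and t=0])
       (auto simp: Rq intro!: nn_integral_mono split: split_indicator)
  also note nn_integral_moment_q_Ici
  also note R.nn_integral_moment_q_Ici
  finally have "(\<integral>\<^sup>+t. ennreal (\<bar>t\<bar> * q t) \<partial>lborel) \<le> ennreal (Z_right\<^sup>2 + R.Z_right\<^sup>2)"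
    using Z_right_nonneg R.Z_right_nonneg by (simp add: ennreal_power ennreal_plus)
  then have "E \<le> Z_right\<^sup>2 + R.Z_right\<^sup>2"
    unfolding E_def by (rule integral_real_bounded[rotated]) simp
  also have "\<dots> \<le> (Z_right + R.Z_right)\<^sup>2"
    using Z_right_nonneg R.Z_right_nonneg by (simp add: power2_sum)
  finally show ?thesis
    unfolding Z_split .
qed

lemma right_tail_mass_le:
  assumes "0 \<le> x" "A \<subseteq> {x..}"
  shows "(LBINT t:A. q t) \<le> q x * Z_right"
    and "0 < c * g x \<Longrightarrow> (LBINT t:A. q t) \<le> q x / (c * g x)"
proof -
  have qx: "0 \<le> q x"
    using q_pos less_imp_le by blast
  show "(LBINT t:A. q t) \<le> q x * Z_right"
  proof (rule set_integral_le_of_nn_set_integral_le[OF \<open>A \<subseteq> {x..}\<close>])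
    show "(\<integral>\<^sup>+t\<in>{x..}. ennreal (q t) \<partial>lborel) \<le> ennreal (q x * Z_right)"
      using nn_integral_Ici_le_dominated[of q q "q x" x] q_submultiplicative[OF \<open>0 \<le> x\<close>]
        qx nn_integral_q_Ici Z_right_nonneg
      by (simp add: ennreal_mult)
  qed (use qx Z_right_nonneg in simp)
  assume "0 < c * g x"
  define a where "a = c * g x"
  have a: "0 < a"
    using \<open>0 < c * g x\<close> by (simp add: a_def)
  have exp_dom: "q (x + u) \<le> q x * exp (- a * u)" for u
    using q_le_tangent[of "x + u" x] by (simp add: a_def)
  show "(LBINT t:A. q t) \<le> q x / (c * g x)"
    unfolding a_def[symmetric]
  proof (rule set_integral_le_of_nn_set_integral_le[OF \<open>A \<subseteq> {x..}\<close>])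
    show "(\<integral>\<^sup>+t\<in>{x..}. ennreal (q t) \<partial>lborel) \<le> ennreal (q x / a)"
      using nn_integral_Ici_le_dominated[of q "\<lambda>u. exp (- a * u)" "q x" x] exp_dom qx
        nn_integral_Ici_power_times_exp[OF a, of 0] a
      by (simp add: ennreal_mult divide_inverse)
  qed (use qx a in simp)
qed

lemma right_tail_moment_le:
  assumes "0 \<le> x" "A \<subseteq> {x..}"
  shows "(LBINT t:A. \<bar>t\<bar> * q t) \<le> q x * (x * Z_right + Z_right\<^sup>2)"
    and "0 < c * g x \<Longrightarrow> (LBINT t:A. \<bar>t\<bar> * q t) \<le> q x * (x / (c * g x) + 1 / (c * g x)\<^sup>2)"
proof -
  have qx: "0 \<le> q x"
    using q_pos less_imp_le by blast
  show "(LBINT t:A. \<bar>t\<bar> * q t) \<le> q x * (x * Z_right + Z_right\<^sup>2)"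
  proof (rule set_integral_le_of_nn_set_integral_le[OF \<open>A \<subseteq> {x..}\<close>])
    show "(\<integral>\<^sup>+t\<in>{x..}. ennreal (\<bar>t\<bar> * q t) \<partial>lborel) \<le> ennreal (q x * (x * Z_right + Z_right\<^sup>2))"
      using nn_integral_Ici_moment_le_dominated[of q q x "q x"] q_submultiplicative[OF \<open>0 \<le> x\<close>]
        q_pos qx nn_integral_q_Ici nn_integral_moment_q_Ici Z_right_nonneg \<open>0 \<le> x\<close>
      by (simp add: less_imp_le ennreal_mult ennreal_plus ennreal_power[symmetric])
         (meson add_left_mono mult_left_mono order.trans zero_le)
  qed (use qx Z_right_nonneg \<open>0 \<le> x\<close> in simp)
  assume "0 < c * g x"
  define a where "a = c * g x"
  have a: "0 < a"
    using \<open>0 < c * g x\<close> by (simp add: a_def)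
  have exp_dom: "q (x + u) \<le> q x * exp (- a * u)" for u
    using q_le_tangent[of "x + u" x] by (simp add: a_def)
  show "(LBINT t:A. \<bar>t\<bar> * q t) \<le> q x * (x / (c * g x) + 1 / (c * g x)\<^sup>2)"
    unfolding a_def[symmetric]
  proof (rule set_integral_le_of_nn_set_integral_le[OF \<open>A \<subseteq> {x..}\<close>])
    show "(\<integral>\<^sup>+t\<in>{x..}. ennreal (\<bar>t\<bar> * q t) \<partial>lborel) \<le> ennreal (q x * (x / a + 1 / a\<^sup>2))"
      using nn_integral_Ici_moment_le_dominated[of q "\<lambda>u. exp (- a * u)" x "q x"] exp_dom qx
        nn_integral_Ici_power_times_exp[OF a, of 0] nn_integral_Ici_power_times_exp[OF a, of 1] a \<open>0 \<le> x\<close>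
      by (simp add: ennreal_mult ennreal_plus divide_inverse power2_eq_square)
  qed (use qx a \<open>0 \<le> x\<close> in simp)
qed

lemma right_tail_estimates:
  assumes "0 \<le> x" "0 \<le> g x" "A \<subseteq> {x..}"
  shows "(LBINT t:A. q t) \<le> Z * q x"
    and "\<bar>c * g x\<bar> * (LBINT t:A. q t) \<le> q x"
    and "(LBINT t:A. \<bar>t\<bar> * q t) + E / Z * (LBINT t:A. q t) \<le> scale x * (\<bar>x\<bar> + 3 * Z) * q x"
proof -
  define a where "a = c * g x"
  have "0 \<le> a"
    using c_pos assms by (simp add: a_def)
  have qx: "0 \<le> q x"
    using q_pos less_imp_le by blast
  note mass = right_tail_mass_le[OF \<open>0 \<le> x\<close> \<open>A \<subseteq> {x..}\<close>, folded a_def]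
  note moment = right_tail_moment_le[OF \<open>0 \<le> x\<close> \<open>A \<subseteq> {x..}\<close>, folded a_def]
  have "q x * Z_right \<le> q x * Z"
    using Z_right_le_Z qx by (rule mult_left_mono)
  then show "(LBINT t:A. q t) \<le> Z * q x"
    using mass(1) by (simp add: mult.commute)
  show "\<bar>c * g x\<bar> * (LBINT t:A. q t) \<le> q x"
  proof (cases "a = 0")
    case False
    then have "0 < a"
      using \<open>0 \<le> a\<close> by simp
    then have "a * (LBINT t:A. q t) \<le> q x"
      using mass(2) by (simp add: pos_le_divide_eq mult.commute)
    then show ?thesis
      using \<open>0 \<le> a\<close> by (simp add: a_def)
  qed (use qx in \<open>auto simp: a_def\<close>)
  have "scale x = (if a = 0 then Z else min Z (1 / a))"
    using c_pos \<open>0 \<le> a\<close> by (simp add: scale_def a_def)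
  then show "(LBINT t:A. \<bar>t\<bar> * q t) + E / Z * (LBINT t:A. q t) \<le> scale x * (\<bar>x\<bar> + 3 * Z) * q x"
    using tail_combination[OF Z_pos Z_right_nonneg Z_right_le_Z \<open>0 \<le> x\<close> \<open>0 \<le> a\<close> qx
        set_integral_q_nonneg E_nonneg E_le_Z_square mass moment] \<open>0 \<le> x\<close>
    by simp
qed

lemma left_tail_estimates:
  assumes "x \<le> 0" "g x \<le> 0" "A \<subseteq> {..x}"
  shows "(LBINT t:A. q t) \<le> Z * q x"
    and "\<bar>c * g x\<bar> * (LBINT t:A. q t) \<le> q x"
    and "(LBINT t:A. \<bar>t\<bar> * q t) + E / Z * (LBINT t:A. q t) \<le> scale x * (\<bar>x\<bar> + 3 * Z) * q x"
proof -
  interpret R: convex_potential "\<lambda>t. G (- t)" "\<lambda>t. - g (- t)" c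
    by (rule reflect_potential)
  have Rq: "R.q = (\<lambda>t. q (- t))"
    by (simp add: R.q_def q_def fun_eq_iff)
  have RZ: "R.Z = Z" and RE: "R.E = E"
    unfolding R.Z_def Z_def R.E_def E_def Rq
    by (subst (2) lborel_integral_real_affine[where c="-1" and t=0]; simp)+
  have Rscale: "R.scale (- x) = scale x"
    by (simp add: R.scale_def scale_def RZ)
  have reflect_integral: "(LBINT t:A. f t) = (LBINT t:{t. - t \<in> A}. f (- t))" for f :: "real \<Rightarrow> real"
    by (rule set_integral_reflect)
  have "{t. - t \<in> A} \<subseteq> {- x..}"
    using assms(3) by auto
  note R.right_tail_estimates[of "- x", OF _ _ this]
  then show "(LBINT t:A. q t) \<le> Z * q x"
    and "\<bar>c * g x\<bar> * (LBINT t:A. q t) \<le> q x"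
    and "(LBINT t:A. \<bar>t\<bar> * q t) + E / Z * (LBINT t:A. q t) \<le> scale x * (\<bar>x\<bar> + 3 * Z) * q x"
    using assms by (simp_all add: reflect_integral[of q] reflect_integral[of "\<lambda>t. \<bar>t\<bar> * q t"] Rq RZ RE Rscale)
qed

definition p :: "real \<Rightarrow> real" where "p t = q t / Z"

definition F :: "real \<Rightarrow> real" where "F x = set_lebesgue_integral lborel {..x} p"

definition M :: "real \<Rightarrow> real"
  where "M x = min (set_lebesgue_integral lborel {..x} (\<lambda>t. \<bar>t\<bar> * p t) + (\<integral>t. \<bar>t\<bar> * p t \<partial>lborel) * F x)
                   (set_lebesgue_integral lborel {x<..} (\<lambda>t. \<bar>t\<bar> * p t) + (\<integral>t. \<bar>t\<bar> * p t \<partial>lborel) * (1 - F x))"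

lemma p_pos: "0 < p t"
  using q_pos Z_pos by (simp add: p_def)

lemma p_has_derivative: "(p has_real_derivative - c * g x * p x) (at x)"
proof -
  have "(q has_real_derivative q x * (- c * g x)) (at x)"
    unfolding q_def[abs_def] by (rule DERIV_chain2[OF DERIV_exp DERIV_cmult[OF G_has_derivative]])
  then show ?thesis
    unfolding p_def[abs_def] using DERIV_cdivide by (fastforce simp: mult.commute)
qed

lemma log_derivative_p: "deriv p t / p t = - c * g t"
  using DERIV_imp_deriv[OF p_has_derivative] p_pos[of t] by simp

lemma deriv_log_derivative_p:
  assumes "g differentiable (at x)"
  shows "deriv (\<lambda>t. deriv p t / p t) x = - c * deriv g x"
proof -
  have "((\<lambda>t. - c * g t) has_real_derivative - c * deriv g x) (at x)"
    using assms by (intro DERIV_cmult) (simp add: DERIV_deriv_iff_real_differentiable)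
  then show ?thesis
    by (simp add: log_derivative_p DERIV_imp_deriv)
qed

lemma F_eq: "F x = (LBINT t:{..x}. q t) / Z"
  by (simp add: F_def p_def[abs_def])

lemma one_minus_F_eq: "1 - F x = (LBINT t:{x<..}. q t) / Z"
proof -
  have UNIV_split: "{..x} \<union> {x<..} = UNIV"
    by auto
  have "(LBINT t:{..x}. q t) + (LBINT t:{x<..}. q t) = (LBINT t:{..x} \<union> {x<..}. q t)"
    by (intro set_integral_Un[symmetric] set_integrable_q) auto
  also have "\<dots> = Z"
    by (simp add: UNIV_split Z_def set_lebesgue_integral_def)
  finally show ?thesis
    using Z_pos by (simp add: F_eq field_simps)
qed

lemma M_eq: "M x = min (((LBINT t:{..x}. \<bar>t\<bar> * q t) + E / Z * (LBINT t:{..x}. q t)) / Z)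
                       (((LBINT t:{x<..}. \<bar>t\<bar> * q t) + E / Z * (LBINT t:{x<..}. q t)) / Z)"
proof -
  have mean: "(\<integral>t. \<bar>t\<bar> * p t \<partial>lborel) = E / Z"
    by (simp add: E_def p_def)
  have moment: "(LBINT t:A. \<bar>t\<bar> * p t) = (LBINT t:A. \<bar>t\<bar> * q t) / Z" for A
    by (simp add: p_def)
  show ?thesis
    unfolding M_def mean moment one_minus_F_eq unfolding F_eq by (simp add: add_divide_distrib)
qed

lemma light_tail_estimates:
  assumes "0 \<le> x \<and> 0 \<le> g x \<or> x \<le> 0 \<and> g x \<le> 0"
  obtains A where "A = {..x} \<or> A = {x<..}"
    and "(LBINT t:A. q t) \<le> Z * q x"
    and "\<bar>c * g x\<bar> * (LBINT t:A. q t) \<le> q x"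
    and "(LBINT t:A. \<bar>t\<bar> * q t) + E / Z * (LBINT t:A. q t) \<le> scale x * (\<bar>x\<bar> + 3 * Z) * q x"
proof -
  consider "0 \<le> x" "0 \<le> g x" | "x \<le> 0" "g x \<le> 0"
    using assms by blast
  then show ?thesis
  proof cases
    case 1
    have "{x<..} \<subseteq> {x..}"
      by auto
    then show ?thesis
      using right_tail_estimates[OF 1] by (intro that[of "{x<..}"]) auto
  next
    case 2
    then show ?thesis
      using left_tail_estimates[OF 2 order.refl] by (intro that[of "{..x}"]) auto
  qed
qed

lemma density_estimates:
  assumes "0 \<le> x \<and> 0 \<le> g x \<or> x \<le> 0 \<and> g x \<le> 0"
  shows "min (1 - F x) (F x) \<le> Z * p x"
    and "\<bar>deriv p x\<bar> * min (F x) (1 - F x) \<le> (p x)\<^sup>2"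
    and "M x \<le> scale x * (\<bar>x\<bar> + 3 * Z) * p x"
proof -
  obtain A where "A = {..x} \<or> A = {x<..}"
    and Q1: "(LBINT t:A. q t) \<le> Z * q x"
    and Q2: "\<bar>c * g x\<bar> * (LBINT t:A. q t) \<le> q x"
    and U: "(LBINT t:A. \<bar>t\<bar> * q t) + E / Z * (LBINT t:A. q t) \<le> scale x * (\<bar>x\<bar> + 3 * Z) * q x"
    using light_tail_estimates[OF assms] by blast
  then have F_le: "min (F x) (1 - F x) \<le> (LBINT t:A. q t) / Z"
    using F_eq[of x] one_minus_F_eq[of x] by (auto simp: min_le_iff_disj)
  have M_le: "M x \<le> ((LBINT t:A. \<bar>t\<bar> * q t) + E / Z * (LBINT t:A. q t)) / Z"
    using \<open>A = {..x} \<or> A = {x<..}\<close> M_eq[of x] by (auto simp: min_le_iff_disj)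
  have "(LBINT t:A. q t) / Z \<le> Z * p x"
    using Q1 Z_pos by (simp add: p_def divide_le_eq mult.commute)
  then show "min (1 - F x) (F x) \<le> Z * p x"
    using F_le by linarith
  have "\<bar>c * g x\<bar> * ((LBINT t:A. q t) / Z) \<le> p x"
    using Q2 Z_pos by (simp add: p_def divide_right_mono)
  then have "\<bar>c * g x\<bar> * min (F x) (1 - F x) \<le> p x"
    using mult_left_mono[OF F_le abs_ge_zero[of "c * g x"]] by linarith
  then show "\<bar>deriv p x\<bar> * min (F x) (1 - F x) \<le> (p x)\<^sup>2"
    using mult_right_mono[OF _ less_imp_le[OF p_pos[of x]]] DERIV_imp_deriv[OF p_has_derivative, of x]
    by (simp add: abs_mult power2_eq_square mult_ac p_pos less_imp_le)
  show "M x \<le> scale x * (\<bar>x\<bar> + 3 * Z) * p x"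
    using M_le divide_right_mono[OF U, of Z] Z_pos by (simp add: p_def)
qed

end

theorem lemma4p2:
  fixes g :: "real \<Rightarrow> real" and c0 c2 :: real
  assumes diff: "\<And>x. g differentiable (at x)"
    and c0_pos: "c0 > 0"
  defines "G \<equiv> \<lambda>t. LBINT s=0..t. g s"
  assumes int: "integrable lborel (\<lambda>t. exp (- c0 * G t))"
  defines "c1 \<equiv> 1 / (\<integral>t. exp (- c0 * G t) \<partial>lborel)"
  defines "p \<equiv> \<lambda>t. c1 * exp (- c0 * G t)"
  defines "F \<equiv> \<lambda>x. set_lebesgue_integral lborel {..x} p"
  defines "EY \<equiv> \<integral>t. \<bar>t\<bar> * p t \<partial>lborel"
  defines "M \<equiv> \<lambda>x. min (set_lebesgue_integral lborel {..x} (\<lambda>t. \<bar>t\<bar> * p t) + EY * F x)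
                           (set_lebesgue_integral lborel {x<..} (\<lambda>t. \<bar>t\<bar> * p t) + EY * (1 - F x))"
  assumes H1: "mono g" "\<forall>t>0. g t \<ge> 0" "\<forall>t\<le>0. g t \<le> 0"
    and H2: "\<forall>x. (if g x = 0 then 1 / c1 else min (1 / c1) (1 / \<bar>c0 * g x\<bar>))
                 * (\<bar>x\<bar> + 3 / c1) * max 1 (c0 * \<bar>deriv g x\<bar>) \<le> c2"
  shows "\<forall>x. min (1 - F x) (F x) \<le> (1 / c1) * p x
           \<and> \<bar>deriv p x\<bar> * min (F x) (1 - F x) \<le> 1 * (p x)\<^sup>2
           \<and> M x * \<bar>deriv (\<lambda>t. deriv p t / p t) x\<bar> \<le> c2 * p x
           \<and> M x \<le> c2 * p x"
proof -
  have "continuous_on UNIV g"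
    using diff by (simp add: continuous_at_imp_continuous_on differentiable_imp_continuous_within)
  interpret P: convex_potential "\<lambda>t. G t" g c0
  proof
    show "((\<lambda>t. G t) has_real_derivative g x) (at x)" for x
      unfolding G_def by (rule interval_integral_0_has_real_derivative) fact
  qed (use int H1(1) c0_pos in \<open>auto simp: G_def zero_ereal_def\<close>)
  have c1: "c1 = 1 / P.Z"
    unfolding c1_def P.Z_def P.q_def ..
  have inv_c1: "1 / c1 = P.Z" and three_div_c1: "3 / c1 = 3 * P.Z"
    using P.Z_pos by (simp_all add: c1)
  have p: "p = P.p"
    by (simp add: p_def P.p_def[abs_def] c1 P.q_def)
  have F: "F = P.F" and M: "M = P.M"
    unfolding F_def M_def EY_def P.F_def[abs_def] P.M_def[abs_def] p by simp_all
  show ?thesis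
  proof (intro allI conjI)
    fix x
    have "0 \<le> x \<and> 0 \<le> g x \<or> x \<le> 0 \<and> g x \<le> 0"
      using H1(2,3) by (cases "0 < x") auto
    note est = P.density_estimates[OF this, folded F M p]
    have H2x: "P.scale x * (\<bar>x\<bar> + 3 * P.Z) * max 1 (c0 * \<bar>deriv g x\<bar>) \<le> c2"
      using H2[rule_format, of x] unfolding inv_c1 three_div_c1 P.scale_def .
    have ratio: "\<bar>deriv (\<lambda>t. deriv p t / p t) x\<bar> \<le> c0 * \<bar>deriv g x\<bar>"
      using P.deriv_log_derivative_p[OF diff] c0_pos by (simp add: p abs_mult)
    show "min (1 - F x) (F x) \<le> 1 / c1 * p x"
      using est(1) by (simp add: inv_c1)
    show "\<bar>deriv p x\<bar> * min (F x) (1 - F x) \<le> 1 * (p x)\<^sup>2"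
      using est(2) by simp
    show "M x * \<bar>deriv (\<lambda>t. deriv p t / p t) x\<bar> \<le> c2 * p x" and "M x \<le> c2 * p x"
      using le_times_max_one[OF est(3) _ _ ratio H2x] P.Z_pos P.p_pos[of x]
      by (auto simp: P.scale_def p)
  qed
qed

end
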